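(* Let $K$ be a field, $c\in K\setminus\{0\}$, $n\ge1$, and let $f$ be the $c$-frieze of order $n$ associated with an $n$-admissible family $(x_i)_{i\in\mathbb{Z}}$. For all $i,j\in\mathbb{Z}$ with $-1\le j-i\le n$ and $f(i,j)\neq0$: (a) $x_{j+1}=\dfrac{f(i,j+1)-cf(i,j-1)}{f(i,j)}$; (b) $x_{i-1}=\dfrac{f(i-1,j)-cf(i+1,j)}{f(i,j)}$.
   Context: The $c$-continuant polynomials $P_k=P_k^c$ ($k\ge-1$) are defined by $P_{-1}=0$, $P_0=1$, and for $k\ge1$, $P_k(y_1,\dots,y_k)=y_kP_{k-1}(y_1,\dots,y_{k-1})+cP_{k-2}(y_1,\dots,y_{k-2})$. A family $(x_i)_{i\in\mathbb{Z}}$ in $K$ is $n$-admissible if $P_{n+2}(x_i,\dots,x_{i+n+1})=0$ for all $i$. Let $\mathbb{B}_n=\{(i,j)\in\mathbb{Z}^2:-2\le j-i\le n+1\}$. The $c$-frieze of order $n$ associated with $(x_i)$ is $f:\mathbb{B}_n\to K$, $f(i,j)=P_{j-i+1}(x_i,\dots,x_j)$. *)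

theory Defs
  imports Main
begin

fun cont :: "'a::field \<Rightarrow> 'a list \<Rightarrow> 'a" where
  "cont c [] = 1"
| "cont c [y] = y"
| "cont c ys = last ys * cont c (butlast ys) + c * cont c (butlast (butlast ys))"

definition P :: "'a::field \<Rightarrow> int \<Rightarrow> 'a list \<Rightarrow> 'a" where
  "P c k ys = (if k = -1 then 0 else cont c ys)"

definition seg :: "(int \<Rightarrow> 'a) \<Rightarrow> int \<Rightarrow> int \<Rightarrow> 'a list" where
  "seg x i j = map x [i..j]"

definition admissible :: "'a::field \<Rightarrow> nat \<Rightarrow> (int \<Rightarrow> 'a) \<Rightarrow> bool" where
  "admissible c n x \<longleftrightarrow> (\<forall>i. P c (int n + 2) (seg x i (i + int n + 1)) = 0)"

definition in_B :: "nat \<Rightarrow> int \<Rightarrow> int \<Rightarrow> bool" where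
  "in_B n i j \<longleftrightarrow> -2 \<le> j - i \<and> j - i \<le> int n + 1"

definition frieze :: "'a::field \<Rightarrow> (int \<Rightarrow> 'a) \<Rightarrow> int \<Rightarrow> int \<Rightarrow> 'a" where
  "frieze c x i j = P c (j - i + 1) (seg x i j)"

end

theory Submission
  imports Defs
begin

text \<open>Both formulas are the continuant recurrence solved for the new entry: adding x(j+1) on
  the right of the segment gives f(i,j+1) = x(j+1) f(i,j) + c f(i,j-1), and adding x(i-1) on
  the left gives f(i-1,j) = x(i-1) f(i,j) + c f(i+1,j). The second needs the fact that
  continuants also satisfy their defining recurrence read from the left end.\<close>

lemma cont_append2: "cont c (ys @ [a, b]) = b * cont c (ys @ [a]) + c * cont c ys"
proof -
  obtain u v vs where uv: "ys @ [a, b] = u # v # vs"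
    by (metis append_Cons append_Nil neq_Nil_conv)
  have "cont c (u # v # vs) = last (u # v # vs) * cont c (butlast (u # v # vs))
          + c * cont c (butlast (butlast (u # v # vs)))"
    by (rule cont.simps(3))
  then show ?thesis
    by (simp only: uv[symmetric] last_appendR butlast_append) simp
qed

lemma list_cases_snoc2:
  assumes "ys \<noteq> []"
  obtains u where "ys = [u]" | u v where "ys = [u, v]" | zs u v where "ys = zs @ [u, v]" "zs \<noteq> []"
proof (cases ys rule: rev_cases)
  case ys: (snoc ws v)
  show ?thesis
  proof (cases ws rule: rev_cases)
    case Nil
    then show ?thesis using ys that(1) by simp
  next
    case (snoc zs u)
    then show ?thesis using ys that(2,3) by (cases "zs = []") auto
  qed
qed (use assms in simp)

lemma cont_Cons:
  assumes "ys \<noteq> []"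
  shows "cont c (a # ys) = a * cont c ys + c * cont c (tl ys)"
  using assms
proof (induction ys rule: length_induct)
  case (1 ys)
  from "1.prems" show ?case
  proof (cases rule: list_cases_snoc2)
    case (3 zs u v)
    have IH: "cont c (a # zs') = a * cont c zs' + c * cont c (tl zs')"
      if "zs' \<noteq> []" "length zs' < length ys" for zs'
      using "1.IH" that by blast
    have "cont c (a # ys) = v * cont c ((a # zs) @ [u]) + c * cont c (a # zs)"
      using cont_append2[of c "a # zs"] by (simp only: 3 append_Cons)
    also have "\<dots> = v * (a * cont c (zs @ [u]) + c * cont c (tl zs @ [u]))
                    + c * (a * cont c zs + c * cont c (tl zs))"
      using IH[of "zs @ [u]"] IH[of zs] 3 by simp
    also have "\<dots> = a * cont c ys + c * cont c (tl ys)"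
      using cont_append2[of c zs] cont_append2[of c "tl zs"] 3 by (simp add: algebra_simps)
    finally show ?thesis .
  qed (simp_all add: algebra_simps)
qed

lemma seg_Nil: "seg x i (i - 1) = []"
  by (simp add: seg_def)

lemma seg_singleton: "seg x i i = [x i]"
  by (simp add: seg_def)

lemma seg_snoc: "i \<le> j + 1 \<Longrightarrow> seg x i (j + 1) = seg x i j @ [x (j + 1)]"
  by (simp add: seg_def upto_rec2)

lemma seg_Cons: "i \<le> j + 1 \<Longrightarrow> seg x (i - 1) j = x (i - 1) # seg x i j"
  by (simp add: seg_def upto_rec1)

lemma frieze_eq_cont: "i \<le> j + 1 \<Longrightarrow> frieze c x i j = cont c (seg x i j)"
  by (simp add: frieze_def P_def)

lemma frieze_below_empty: "frieze c x i (i - 2) = 0"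
  by (simp add: frieze_def P_def)

lemma frieze_extend_right:
  assumes "i \<le> j + 1"
  shows "frieze c x i (j + 1) = x (j + 1) * frieze c x i j + c * frieze c x i (j - 1)"
proof (cases "j = i - 1")
  case True
  then show ?thesis
    using frieze_below_empty[of c x i] by (simp add: frieze_eq_cont seg_Nil seg_singleton)
next
  case False
  then have "seg x i (j + 1) = seg x i (j - 1) @ [x j, x (j + 1)]"
    using assms seg_snoc[of i j x] seg_snoc[of i "j - 1" x] by simp
  then show ?thesis
    using False assms cont_append2[of c "seg x i (j - 1)"] seg_snoc[of i "j - 1" x]
    by (simp add: frieze_eq_cont)
qed

lemma frieze_extend_left:
  assumes "i \<le> j + 1"
  shows "frieze c x (i - 1) j = x (i - 1) * frieze c x i j + c * frieze c x (i + 1) j"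
proof (cases "j = i - 1")
  case True
  then show ?thesis
    using frieze_below_empty[of c x "i + 1"] by (simp add: frieze_eq_cont seg_Nil seg_singleton)
next
  case False
  then have ne: "seg x i j \<noteq> []" and tl: "tl (seg x i j) = seg x (i + 1) j"
    using assms seg_Cons[of "i + 1" j x] by auto
  show ?thesis
    using False assms cont_Cons[OF ne, of c "x (i - 1)"] seg_Cons[of i j x]
    by (simp add: frieze_eq_cont tl)
qed

theorem mainTheorem13:
  fixes c :: "'a::field" and x :: "int \<Rightarrow> 'a" and n :: nat and i j :: int
  assumes "c \<noteq> 0" and "n \<ge> 1" and "admissible c n x"
    and "-1 \<le> j - i" and "j - i \<le> int n"
    and "frieze c x i j \<noteq> 0"
  shows "x (j + 1) = (frieze c x i (j + 1) - c * frieze c x i (j - 1)) / frieze c x i j \<and>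
         x (i - 1) = (frieze c x (i - 1) j - c * frieze c x (i + 1) j) / frieze c x i j"
proof -
  have "i \<le> j + 1" using assms(4) by simp
  then show ?thesis
    using frieze_extend_right[of i j c x] frieze_extend_left[of i j c x] assms(6)
    by (simp add: field_simps)
qed

end
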